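(* Let $q$ be a prime power and let $\mathcal C$ be an optimal $(5,3)_q$ subspace code, i.e. a set of subspaces of $V={\rm GF}(q)^5$ with minimum subspace distance $3$ and of maximum possible size among such sets. If $\mathcal C$ contains a point of ${\rm PG}(4,q)$ (a $1$-dimensional subspace of $V$), then $\mathcal C$ contains at most $q^3$ planes (3-dimensional subspaces of $V$). Dually, if $\mathcal C$ contains a solid (a $4$-dimensional subspace of $V$), then $\mathcal C$ contains at most $q^3$ lines ($2$-dimensional subspaces of $V$).
   Context: The subspace distance between subspaces $U,U'$ of $V$ is $d_s(U,U')=\dim(U+U')-\dim(U\cap U')$. The minimum subspace distance of a set $\mathcal C$ of subspaces is $\min\{d_s(U,U') : U,U'\in\mathcal C, U\ne U'\}$. Points, lines, planes and solids of ${\rm PG}(4,q)$ are the subspaces of $V$ of (vector) dimension $1,2,3,4$ respectively. *)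

theory Defs
  imports "HOL-Analysis.Analysis"
begin

text \<open>The ambient space V = GF(q)^5 is modelled as the type 'a^5 for a finite field 'a
  (so q = CARD('a), automatically a prime power).\<close>

definition subspace_sum :: "('a::field ^ 'n) set \<Rightarrow> ('a ^ 'n) set \<Rightarrow> ('a ^ 'n) set" where
  "subspace_sum U W = {u + w | u w. u \<in> U \<and> w \<in> W}"

definition subspace_dist :: "('a::field ^ 'n) set \<Rightarrow> ('a ^ 'n) set \<Rightarrow> nat" where
  "subspace_dist U W = vec.dim (subspace_sum U W) - vec.dim (U \<inter> W)"

definition min_subspace_dist :: "('a::field ^ 'n) set set \<Rightarrow> nat" where
  "min_subspace_dist C = Min {subspace_dist U W | U W. U \<in> C \<and> W \<in> C \<and> U \<noteq> W}"

definition subspace_code :: "nat \<Rightarrow> ('a::field ^ 'n) set set \<Rightarrow> bool" where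
  "subspace_code d (C :: ('a::field ^ 'n) set set) \<longleftrightarrow> (\<forall>U\<in>C. vec.subspace U) \<and> min_subspace_dist C = d"

definition optimal_subspace_code :: "nat \<Rightarrow> ('a::field ^ 'n) set set \<Rightarrow> bool" where
  "optimal_subspace_code d (C :: ('a::field ^ 'n) set set) \<longleftrightarrow> subspace_code d C \<and>
     (\<forall>C' :: ('a ^ 'n) set set. subspace_code d C' \<longrightarrow> card C' \<le> card C)"

end

theory Submission
  imports Defs
begin

text \<open>Both bounds are double counts. Planes of the code avoid the point P = \<langle>p\<rangle> and pairwise
  span V, so each lies in at least q hyperplanes avoiding p, no hyperplane contains two of them,
  and there are q^4 hyperplanes avoiding p in all. Dually, lines of the code are not contained in
  the solid S and pairwise meet trivially, so the sets of their q^2 - q vectors outside S are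
  pairwise disjoint subsets of the q^5 - q^4 vectors outside S.\<close>

text \<open>Linear functionals are represented by vectors y acting as x \<mapsto> pairing y x, so that
  hyperplanes can be counted as sets of vectors.\<close>

definition pairing :: "'a::field ^ 'n \<Rightarrow> 'a ^ 'n \<Rightarrow> 'a" where
  "pairing y x = (\<Sum>i\<in>UNIV. y $ i * x $ i)"

lemma pairing_add_right: "pairing y (u + w) = pairing y u + pairing y w"
  unfolding pairing_def by (simp add: distrib_left sum.distrib)

lemma pairing_scale_right: "pairing y (c *s u) = c * pairing y u"
  unfolding pairing_def by (simp add: sum_distrib_left algebra_simps)

lemma pairing_add_left: "pairing (y + z) u = pairing y u + pairing z u"
  unfolding pairing_def by (simp add: distrib_right sum.distrib)

lemma pairing_scale_left: "pairing (c *s y) u = c * pairing y u"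
  unfolding pairing_def by (simp add: sum_distrib_left algebra_simps)

lemma vector_space_pair_vec_field:
  "vector_space_pair ((*s) :: 'a::field \<Rightarrow> 'a ^ 'n \<Rightarrow> 'a ^ 'n) ((*) :: 'a \<Rightarrow> 'a \<Rightarrow> 'a)"
  unfolding vector_space_pair_def
  using vec.vector_space_axioms vector_space_over_itself.vector_space_axioms by blast

lemma linear_functional_eq_pairing:
  fixes g :: "'a::field ^ 'n \<Rightarrow> 'a"
  assumes "Vector_Spaces.linear (*s) (*) g"
  shows "g x = pairing (\<chi> i. g (axis i 1)) x"
proof -
  have "x = (\<Sum>i\<in>UNIV. x $ i *s axis i 1)"
    by (simp add: vec_eq_iff axis_def sum_component if_distrib cong: if_cong)
  then have "g x = (\<Sum>i\<in>UNIV. g (x $ i *s axis i 1))"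
    using vector_space_pair.linear_sum[OF vector_space_pair_vec_field assms] by metis
  also have "\<dots> = (\<Sum>i\<in>UNIV. x $ i * g (axis i 1))"
    using vector_space_pair.linear_scale[OF vector_space_pair_vec_field assms] by simp
  finally show ?thesis
    unfolding pairing_def by (simp add: mult.commute)
qed

lemma independent_extend_pairing:
  fixes B :: "('a::field ^ 'n) set"
  assumes "vec.independent B"
  shows "\<exists>y. \<forall>b\<in>B. pairing y b = f b"
proof -
  obtain g where "Vector_Spaces.linear (*s) (*) g" "\<forall>x\<in>B. g x = f x"
    using vector_space_pair.linear_independent_extend[OF vector_space_pair_vec_field assms]
    by blast
  then show ?thesis
    using linear_functional_eq_pairing by metis
qed

lemma pairing_span_eq_0:
  assumes "\<forall>b\<in>B. pairing y b = 0" and "x \<in> vec.span B"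
  shows "pairing y x = 0"
proof -
  have "pairing y 0 = 0"
    unfolding pairing_def by simp
  then have "vec.subspace {x. pairing y x = 0}"
    unfolding vec.subspace_def by (simp add: pairing_add_right pairing_scale_right)
  then have "vec.span B \<subseteq> {x. pairing y x = 0}"
    using assms(1) by (intro vec.span_minimal) auto
  then show ?thesis
    using assms(2) by blast
qed

lemma card_field_ge_2: "2 \<le> CARD('a::{finite,field})"
proof -
  have "card {0::'a, 1} \<le> CARD('a)"
    by (rule card_mono) auto
  then show ?thesis
    by simp
qed

lemma card_subspace:
  fixes U :: "('a::{finite,field} ^ 'n) set"
  assumes "vec.subspace U"
  shows "card U = CARD('a) ^ vec.dim U"
proof -
  obtain B where B: "B \<subseteq> U" "vec.independent B" "U \<subseteq> vec.span B" "card B = vec.dim U"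
    using vec.basis_exists by blast
  define comb where "comb = (\<lambda>c. \<Sum>v\<in>B. c v *s v)"
  have "U = vec.span B"
    using B assms vec.span_minimal by blast
  also have "\<dots> = range comb"
    unfolding comb_def by (simp add: vec.span_finite)
  also have "\<dots> = comb ` (B \<rightarrow>\<^sub>E UNIV)"
  proof
    show "range comb \<subseteq> comb ` (B \<rightarrow>\<^sub>E UNIV)"
    proof
      fix x assume "x \<in> range comb"
      then obtain c where "x = comb c"
        by blast
      moreover have "comb c = comb (restrict c B)"
        unfolding comb_def by (intro sum.cong) auto
      ultimately show "x \<in> comb ` (B \<rightarrow>\<^sub>E UNIV)"
        by auto
    qed
  qed auto
  finally have U_eq: "U = comb ` (B \<rightarrow>\<^sub>E UNIV)" .
  have "inj_on comb (B \<rightarrow>\<^sub>E UNIV)"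
  proof
    fix c d assume c: "c \<in> B \<rightarrow>\<^sub>E UNIV" and d: "d \<in> B \<rightarrow>\<^sub>E UNIV" and "comb c = comb d"
    then have comb_diff: "(\<Sum>v\<in>B. (c v - d v) *s v) = 0"
      unfolding comb_def by (simp add: vector_sub_rdistrib sum_subtractf)
    have indep: "\<forall>c. (\<Sum>v\<in>B. c v *s v) = 0 \<longrightarrow> (\<forall>v\<in>B. c v = 0)"
      using B(2) vec.independent_explicit by blast
    have "\<forall>v\<in>B. c v - d v = 0"
      using spec[OF indep, of "\<lambda>v. c v - d v"] comb_diff by simp
    then show "c = d"
      by (intro PiE_ext[OF c d]) auto
  qed
  then show ?thesis
    using U_eq B(4) by (simp add: card_image card_PiE)
qed

lemma card_pairing_eq_1_le:
  fixes p :: "'a::{finite,field} ^ 'n"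
  assumes "p \<noteq> 0"
  shows "card {y. pairing y p = 1} \<le> CARD('a) ^ (CARD('n) - 1)"
proof -
  obtain j where j: "p $ j \<noteq> 0"
    using assms by (metis vec_eq_iff zero_index)
  define drop_j where "drop_j = (\<lambda>y::'a ^ 'n. restrict (vec_nth y) (UNIV - {j}))"
  have "inj_on drop_j {y. pairing y p = 1}"
  proof
    fix y z assume "y \<in> {y. pairing y p = 1}" "z \<in> {y. pairing y p = 1}"
      and eq: "drop_j y = drop_j z"
    then have yz: "pairing y p = pairing z p"
      by simp
    have off_j: "y $ i = z $ i" if "i \<noteq> j" for i
      using fun_cong[OF eq, of i] that unfolding drop_j_def by simp
    have "0 = (\<Sum>i\<in>UNIV. (y $ i - z $ i) * p $ i)"
      using yz unfolding pairing_def by (simp add: sum_subtractf left_diff_distrib)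
    also have "\<dots> = (y $ j - z $ j) * p $ j"
      using off_j by (subst sum.remove[of UNIV j]) auto
    finally have "y $ j = z $ j"
      using j by simp
    then show "y = z"
      using off_j by (metis vec_eq_iff)
  qed
  moreover have "drop_j ` {y. pairing y p = 1} \<subseteq> (UNIV - {j}) \<rightarrow>\<^sub>E UNIV"
    unfolding drop_j_def by auto
  ultimately have "card {y. pairing y p = 1} \<le> card ((UNIV - {j}) \<rightarrow>\<^sub>E (UNIV :: 'a set))"
    by (metis card_image card_mono finite)
  also have "\<dots> = CARD('a) ^ (CARD('n) - 1)"
    by (simp add: card_PiE card_Diff_subset)
  finally show ?thesis .
qed

lemma subspace_basis_extend_two:
  fixes U :: "('a::field ^ 'n) set"
  assumes U: "vec.subspace U" and p: "p \<notin> U" and dim_U: "vec.dim U + 2 \<le> CARD('n)"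
  obtains B e where "vec.independent (insert e (insert p B))" "U \<subseteq> vec.span B"
    "p \<notin> B" "e \<notin> insert p B"
proof -
  obtain B where B: "B \<subseteq> U" "vec.independent B" "U \<subseteq> vec.span B" "card B = vec.dim U"
    using vec.basis_exists by blast
  have p_B: "p \<notin> vec.span B"
    using p vec.span_minimal[OF B(1) U] by blast
  have indep_pB: "vec.independent (insert p B)"
    by (rule vec.independent_insertI[OF p_B B(2)])
  have "p \<notin> B"
    using p_B vec.span_base by blast
  then have dim_pB: "vec.dim (vec.span (insert p B)) = vec.dim U + 1"
    using vec.dim_span_eq_card_independent[OF indep_pB] B(4) vec.finiteI_independent[OF B(2)]
    by simp
  have "vec.span (insert p B) \<noteq> UNIV"
  proof
    assume "vec.span (insert p B) = UNIV"
    then have "CARD('n) = vec.dim U + 1"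
      using dim_pB vec_dim_card[where 'a='a and 'n='n] by simp
    then show False
      using dim_U by simp
  qed
  then obtain e where e: "e \<notin> vec.span (insert p B)"
    by blast
  have "vec.independent (insert e (insert p B))"
    by (rule vec.independent_insertI[OF e indep_pB])
  moreover have "e \<notin> insert p B"
    using e vec.span_base[of e "insert p B"] by blast
  ultimately show ?thesis
    using that[OF _ B(3) \<open>p \<notin> B\<close>] by blast
qed

lemma card_annihilator_ge:
  fixes U :: "('a::{finite,field} ^ 'n) set"
  assumes "vec.subspace U" and "p \<notin> U" and "vec.dim U + 2 \<le> CARD('n)"
  shows "CARD('a) \<le> card {y. pairing y p = 1 \<and> (\<forall>u\<in>U. pairing y u = 0)}"
proof -
  obtain B e where indep_epB: "vec.independent (insert e (insert p B))"
    and B: "U \<subseteq> vec.span B" "p \<notin> B" "e \<notin> insert p B"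
    by (rule subspace_basis_extend_two[OF assms])
  obtain y0 where y0: "\<forall>b\<in>insert e (insert p B). pairing y0 b = (if b = p then 1 else 0)"
    using independent_extend_pairing[OF indep_epB, of "\<lambda>b. if b = p then 1 else 0"] by blast
  obtain y1 where y1: "\<forall>b\<in>insert e (insert p B). pairing y1 b = (if b = e then 1 else 0)"
    using independent_extend_pairing[OF indep_epB, of "\<lambda>b. if b = e then 1 else 0"] by blast
  have y0_B: "\<forall>b\<in>B. pairing y0 b = 0" and y1_B: "\<forall>b\<in>B. pairing y1 b = 0"
    using y0 y1 B(2,3) by auto
  define line where "line = (\<lambda>c::'a. y0 + c *s y1)"
  have "range line \<subseteq> {y. pairing y p = 1 \<and> (\<forall>u\<in>U. pairing y u = 0)}"
  proof
    fix y assume "y \<in> range line"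
    then obtain c where c: "y = line c"
      by blast
    have "pairing y0 u = 0" "pairing y1 u = 0" if "u \<in> U" for u
      using that B(1) pairing_span_eq_0[OF y0_B] pairing_span_eq_0[OF y1_B] by blast+
    moreover have "pairing y0 p = 1" "pairing y1 p = 0"
      using y0 y1 B(3) by auto
    ultimately show "y \<in> {y. pairing y p = 1 \<and> (\<forall>u\<in>U. pairing y u = 0)}"
      unfolding c line_def by (simp add: pairing_add_left pairing_scale_left)
  qed
  moreover have "inj line"
  proof
    fix c d assume "line c = line d"
    then have "pairing (line c) e = pairing (line d) e"
      by simp
    then show "c = d"
      using y0 y1 B(3) unfolding line_def by (simp add: pairing_add_left pairing_scale_left)
  qed
  ultimately show ?thesis
    using card_mono[of _ "range line"] by (simp add: card_image)
qed

lemma card_subspaces_pairwise_spanning_le: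
  fixes F :: "('a::{finite,field} ^ 'n) set set"
  assumes p: "p \<noteq> 0"
    and members: "\<And>U. U \<in> F \<Longrightarrow> vec.subspace U \<and> vec.dim U + 2 \<le> CARD('n) \<and> p \<notin> U"
    and spanning: "\<And>U W. U \<in> F \<Longrightarrow> W \<in> F \<Longrightarrow> U \<noteq> W \<Longrightarrow> p \<in> subspace_sum U W"
  shows "card F \<le> CARD('a) ^ (CARD('n) - 2)"
proof (cases "F = {}")
  case False
  let ?q = "CARD('a)"
  text \<open>A hyperplane avoiding p has exactly one defining functional y with y p = 1.\<close>
  define hyperplanes where "hyperplanes U = {y. pairing y p = 1 \<and> (\<forall>u\<in>U. pairing y u = 0)}"
    for U :: "('a ^ 'n) set"
  have disjoint: "hyperplanes U \<inter> hyperplanes W = {}" if UW: "U \<in> F" "W \<in> F" "U \<noteq> W" for U W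
  proof -
    obtain u w where "p = u + w" "u \<in> U" "w \<in> W"
      using spanning[OF UW] unfolding subspace_sum_def by blast
    then show ?thesis
      unfolding hyperplanes_def by (auto simp: pairing_add_right)
  qed
  obtain U where "U \<in> F"
    using False by blast
  then have "2 \<le> CARD('n)"
    using members by fastforce
  define m where "m = CARD('n) - 2"
  with \<open>2 \<le> CARD('n)\<close> have m: "CARD('n) = m + 2"
    by simp
  have "card F * ?q = (\<Sum>U\<in>F. ?q)"
    by simp
  also have "\<dots> \<le> (\<Sum>U\<in>F. card (hyperplanes U))"
    unfolding hyperplanes_def using members card_annihilator_ge by (intro sum_mono) blast
  also have "\<dots> = card (\<Union>U\<in>F. hyperplanes U)"
    using disjoint by (intro card_UN_disjoint[symmetric]) auto
  also have "\<dots> \<le> card {y. pairing y p = 1}"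
    by (rule card_mono) (auto simp: hyperplanes_def)
  also have "\<dots> \<le> ?q ^ (m + 1)"
    using card_pairing_eq_1_le[OF p] m by simp
  finally show ?thesis
    using m card_field_ge_2[where 'a='a] by simp
qed simp

lemma card_lines_meeting_trivially_le:
  fixes F :: "('a::{finite,field} ^ 'n) set set"
  assumes S: "vec.subspace S" "vec.dim S + 1 = CARD('n)"
    and members: "\<And>L. L \<in> F \<Longrightarrow> vec.subspace L \<and> vec.dim L = 2 \<and> \<not> L \<subseteq> S"
    and trivial: "\<And>L M. L \<in> F \<Longrightarrow> M \<in> F \<Longrightarrow> L \<noteq> M \<Longrightarrow> L \<inter> M = {0}"
  shows "card F \<le> CARD('a) ^ (CARD('n) - 2)"
proof (cases "F = {}")
  case False
  let ?q = "CARD('a)"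
  have q: "2 \<le> ?q"
    by (rule card_field_ge_2)
  have outside: "?q ^ 2 - ?q \<le> card (L - S)" if "L \<in> F" for L
  proof -
    have L: "vec.subspace L" "vec.dim L = 2" "\<not> L \<subseteq> S"
      using members[OF that] by auto
    have LS: "vec.subspace (L \<inter> S)"
      using L(1) S(1) by (rule vec.subspace_inter)
    have spans: "vec.span (L \<inter> S) = L \<inter> S" "vec.span L = L"
      using LS L(1) by simp_all
    have "vec.span (L \<inter> S) \<subset> vec.span L"
      unfolding spans using L(3) by blast
    then have "vec.dim (L \<inter> S) < vec.dim L"
      by (rule vec.dim_psubset)
    then have "?q ^ vec.dim (L \<inter> S) \<le> ?q ^ 1"
      using q L(2) by (intro power_increasing) auto
    then have "card (L \<inter> S) \<le> ?q"
      using card_subspace[OF LS] by simp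
    moreover have "card L = ?q ^ 2"
      using card_subspace[OF L(1)] L(2) by simp
    ultimately show ?thesis
      by (simp add: card_Diff_subset_Int)
  qed
  have disjoint: "(L - S) \<inter> (M - S) = {}" if "L \<in> F" "M \<in> F" "L \<noteq> M" for L M
  proof -
    have "(L - S) \<inter> (M - S) = (L \<inter> M) - S"
      by blast
    then show ?thesis
      using trivial[OF that] vec.subspace_0[OF S(1)] by simp
  qed
  obtain L where "L \<in> F"
    using False by blast
  then have "2 \<le> CARD('n)"
    using members dim_subset_UNIV_cart_gen[of L] by auto
  define m where "m = CARD('n) - 2"
  with \<open>2 \<le> CARD('n)\<close> have m: "CARD('n) = m + 2"
    by simp
  have "?q * 1 < ?q * ?q"
    using q by (intro mult_strict_left_mono) auto
  then have q2_q: "0 < ?q ^ 2 - ?q"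
    by (simp add: power2_eq_square)
  have "card F * (?q ^ 2 - ?q) = (\<Sum>L\<in>F. ?q ^ 2 - ?q)"
    by simp
  also have "\<dots> \<le> (\<Sum>L\<in>F. card (L - S))"
    using outside by (rule sum_mono)
  also have "\<dots> = card (\<Union>L\<in>F. L - S)"
    using disjoint by (intro card_UN_disjoint[symmetric]) auto
  also have "\<dots> \<le> card (UNIV - S)"
    by (rule card_mono) auto
  also have "\<dots> = ?q ^ (m + 2) - ?q ^ (m + 1)"
    using card_subspace[OF S(1)] S(2) m by (simp add: card_Diff_subset)
  also have "\<dots> = ?q ^ m * (?q ^ 2 - ?q)"
    by (simp only: power_add power_one_right diff_mult_distrib2)
  finally show ?thesis
    using m q2_q by simp
qed simp

lemma subspace_eq_UNIV_if_dim:
  fixes U :: "('a::field ^ 'n) set"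
  assumes "vec.subspace U" and "vec.dim U = CARD('n)"
  shows "U = UNIV"
  using assms vec_dim_card[where 'a='a and 'n='n] by (intro vec.subspace_dim_equal) simp_all

lemma dim_subspace_sum_Int:
  assumes "vec.subspace U" and "vec.subspace W"
  shows "vec.dim (subspace_sum U W) + vec.dim (U \<inter> W) = vec.dim U + vec.dim W"
  unfolding subspace_sum_def using vec.dim_sums_Int[OF assms] .

lemma subspace_dist_add_dim_Int:
  assumes "vec.subspace U" and "vec.subspace W"
  shows "subspace_dist U W + 2 * vec.dim (U \<inter> W) = vec.dim U + vec.dim W"
proof -
  have "U \<inter> W \<subseteq> subspace_sum U W"
  proof
    fix x assume "x \<in> U \<inter> W"
    then have "x = x + 0" "x \<in> U" "0 \<in> W"
      using vec.subspace_0[OF assms(2)] by simp_all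
    then show "x \<in> subspace_sum U W"
      unfolding subspace_sum_def by blast
  qed
  then have "vec.dim (U \<inter> W) \<le> vec.dim (subspace_sum U W)"
    by (rule vec.dim_subset)
  then show ?thesis
    using dim_subspace_sum_Int[OF assms] unfolding subspace_dist_def by linarith
qed

lemma subspace_code_dist_ge:
  fixes C :: "('a::{finite,field} ^ 'n) set set"
  assumes "subspace_code d C" and "U \<in> C" "W \<in> C" "U \<noteq> W"
  shows "d \<le> subspace_dist U W"
proof -
  let ?dists = "{subspace_dist U W | U W. U \<in> C \<and> W \<in> C \<and> U \<noteq> W}"
  have "?dists \<subseteq> (\<lambda>(U, W). subspace_dist U W) ` (C \<times> C)"
    by auto
  then have "finite ?dists"
    by (rule finite_subset) simp
  then have "Min ?dists \<le> subspace_dist U W"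
    by (rule Min_le) (use assms(2-4) in blast)
  moreover have "Min ?dists = d"
    using assms(1) unfolding subspace_code_def min_subspace_dist_def by simp
  ultimately show ?thesis
    by simp
qed

lemma subspace_code_dim_psubset:
  fixes C :: "('a::{finite,field} ^ 'n) set set"
  assumes code: "subspace_code d C" and "U \<in> C" "W \<in> C" and "U \<subset> W"
  shows "vec.dim U + d \<le> vec.dim W"
proof -
  have "vec.subspace U" "vec.subspace W"
    using assms(1-3) unfolding subspace_code_def by auto
  then have "subspace_dist U W + 2 * vec.dim U = vec.dim U + vec.dim W"
    using subspace_dist_add_dim_Int[of U W] \<open>U \<subset> W\<close> by (simp add: Int_absorb2)
  moreover have "d \<le> subspace_dist U W"
    using subspace_code_dist_ge assms by blast
  ultimately show ?thesis
    by linarith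
qed

lemma card_planes_of_code_le:
  fixes C :: "('a::{finite,field} ^ 5) set set"
  assumes code: "subspace_code 3 C" and P: "P \<in> C" "vec.dim P = 1"
  shows "card {U \<in> C. vec.dim U = 3} \<le> CARD('a) ^ 3"
proof -
  have subspace: "vec.subspace U" if "U \<in> C" for U
    using code that unfolding subspace_code_def by blast
  obtain p where p: "p \<noteq> 0" "P = vec.span {p}"
  proof -
    obtain B where B: "B \<subseteq> P" "vec.independent B" "P \<subseteq> vec.span B" "card B = 1"
      using vec.basis_exists P(2) by metis
    then obtain p where "B = {p}"
      by (meson card_1_singletonE)
    moreover have "vec.span B \<subseteq> P"
      using B(1) subspace[OF P(1)] by (rule vec.span_minimal)
    ultimately show ?thesis
      using that B(2,3) by auto
  qed
  have "p \<notin> U" if "U \<in> C" "vec.dim U = 3" for U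
  proof
    assume "p \<in> U"
    then have "P \<subset> U"
      using p(2) vec.span_minimal[of "{p}" U] subspace[OF that(1)] P(2) that(2) by auto
    then show False
      using subspace_code_dim_psubset[OF code P(1) that(1)] P(2) that(2) by simp
  qed
  moreover have "p \<in> subspace_sum U W"
    if "U \<in> C" "vec.dim U = 3" "W \<in> C" "vec.dim W = 3" "U \<noteq> W" for U W
  proof -
    have UW: "vec.subspace U" "vec.subspace W"
      using subspace that by auto
    have "3 \<le> subspace_dist U W"
      using subspace_code_dist_ge[OF code] that by blast
    then have "vec.dim (subspace_sum U W) = CARD(5)"
      using subspace_dist_add_dim_Int[OF UW] dim_subspace_sum_Int[OF UW] that
        dim_subset_UNIV_cart_gen[of "subspace_sum U W"] by simp
    moreover have "vec.subspace (subspace_sum U W)"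
      unfolding subspace_sum_def using vec.subspace_sums[OF UW] .
    ultimately show ?thesis
      using subspace_eq_UNIV_if_dim by blast
  qed
  ultimately show ?thesis
    using card_subspaces_pairwise_spanning_le[of p "{U \<in> C. vec.dim U = 3}"] p(1) subspace
    by auto
qed

lemma card_lines_of_code_le:
  fixes C :: "('a::{finite,field} ^ 5) set set"
  assumes code: "subspace_code 3 C" and S: "S \<in> C" "vec.dim S = 4"
  shows "card {L \<in> C. vec.dim L = 2} \<le> CARD('a) ^ 3"
proof -
  have subspace: "vec.subspace L" if "L \<in> C" for L
    using code that unfolding subspace_code_def by blast
  have "\<not> L \<subseteq> S" if "L \<in> C" "vec.dim L = 2" for L
  proof
    assume "L \<subseteq> S"
    then have "L \<subset> S"
      using that(2) S(2) by auto
    then show False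
      using subspace_code_dim_psubset[OF code that(1) S(1)] S(2) that(2) by simp
  qed
  moreover have "L \<inter> M = {0}"
    if "L \<in> C" "vec.dim L = 2" "M \<in> C" "vec.dim M = 2" "L \<noteq> M" for L M
  proof -
    have LM: "vec.subspace L" "vec.subspace M"
      using subspace that by auto
    have "3 \<le> subspace_dist L M"
      using subspace_code_dist_ge[OF code] that by blast
    then have "vec.dim (L \<inter> M) = 0"
      using subspace_dist_add_dim_Int[OF LM] that by linarith
    then show ?thesis
      using vec.subspace_0[OF vec.subspace_inter[OF LM]] by auto
  qed
  ultimately show ?thesis
    using card_lines_meeting_trivially_le[of S "{L \<in> C. vec.dim L = 2}"] subspace S
    by auto
qed

theorem lemma1p1:
  fixes C :: "('a::{finite,field} ^ 5) set set"
  assumes "optimal_subspace_code 3 C"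
  shows "((\<exists>P\<in>C. vec.dim P = 1) \<longrightarrow> card {U \<in> C. vec.dim U = 3} \<le> CARD('a) ^ 3) \<and>
         ((\<exists>S\<in>C. vec.dim S = 4) \<longrightarrow> card {U \<in> C. vec.dim U = 2} \<le> CARD('a) ^ 3)"
proof -
  have code: "subspace_code 3 C"
    using assms unfolding optimal_subspace_code_def by blast
  show ?thesis
    using card_planes_of_code_le[OF code] card_lines_of_code_le[OF code] by blast
qed

end
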